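(* Let $(V,\langle\cdot\,,\cdot\rangle_V)$ be an admissible module and $\Omega_1,\ldots,\Omega_l$ symmetric linear operators on $V$ with $\Omega_k^2=-\mathrm{Id}_V$ for all $k$ and $\Omega_k\Omega_j=-\Omega_j\Omega_k$ for all $k\neq j$. Let $P$ be a linear operator on $V$ with $P^2=\mathrm{Id}_V$ and $P\Omega_k=\Omega_kP$ for $k=1,\ldots,l$. If $w\in V$ satisfies $Pw=w$ and $\langle w,w\rangle_V=1$, then there is a vector $\tilde w\in V$ with $\langle\tilde w,\tilde w\rangle_V=1$, $\langle\tilde w,\Omega_k\tilde w\rangle_V=0$ for all $k=1,\ldots,l$, and $P\tilde w=\tilde w$.
   Context: A scalar product is a real symmetric non-degenerate bilinear form. A linear operator $\Omega$ on $V$ is symmetric if $\langle\Omega v,w\rangle_V=\langle v,\Omega w\rangle_V$ for all $v,w$. An admissible module is a real vector space $V$ which is a module over a Clifford algebra $\mathrm{Cl}_{r,s}$ (generated by $\mathbb R^{r,s}$ with $z^2=-\langle z,z\rangle\cdot1$), with representation $z\mapsto J_z$, together with a scalar product $\langle\cdot\,,\cdot\rangle_V$ satisfying $\langle J_zu,v\rangle_V=-\langle u,J_zv\rangle_V$ for all $z\in\mathbb R^{r,s}$, $u,v\in V$. *)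

theory Defs
  imports "HOL-Analysis.Analysis"
begin

definition scalar_product :: "('v::real_vector \<Rightarrow> 'v \<Rightarrow> real) \<Rightarrow> bool" where
  "scalar_product B \<longleftrightarrow> bilinear B \<and> (\<forall>u v. B u v = B v u) \<and>
     (\<forall>u. (\<forall>v. B u v = 0) \<longrightarrow> u = 0)"

text \<open>Vectors of R^{r,s}, represented as functions nat => real supported on indices below r+s.\<close>
definition rs_vec :: "nat \<Rightarrow> nat \<Rightarrow> (nat \<Rightarrow> real) \<Rightarrow> bool" where
  "rs_vec r s z \<longleftrightarrow> (\<forall>i\<ge>r+s. z i = 0)"

definition rs_inner :: "nat \<Rightarrow> nat \<Rightarrow> (nat \<Rightarrow> real) \<Rightarrow> (nat \<Rightarrow> real) \<Rightarrow> real" where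
  "rs_inner r s z w = (\<Sum>i<r. z i * w i) - (\<Sum>i\<in>{r..<r+s}. z i * w i)"

text \<open>Admissible module: a finite-dimensional Cl_{r,s}-module V (given by z \<mapsto> J z, linear in z,
  with J z ^2 = - <z,z> Id) with a scalar product B for which every J z is skew.\<close>
definition admissible_module ::
  "nat \<Rightarrow> nat \<Rightarrow> ((nat \<Rightarrow> real) \<Rightarrow> 'v::real_vector \<Rightarrow> 'v) \<Rightarrow> ('v \<Rightarrow> 'v \<Rightarrow> real) \<Rightarrow> bool" where
  "admissible_module r s J B \<longleftrightarrow>
     (\<exists>S. finite S \<and> span S = (UNIV :: 'v set)) \<and>
     scalar_product B \<and>
     (\<forall>z w a b. rs_vec r s z \<and> rs_vec r s w \<longrightarrow>
        J (\<lambda>i. a * z i + b * w i) = (\<lambda>v. a *\<^sub>R J z v + b *\<^sub>R J w v)) \<and>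
     (\<forall>z. rs_vec r s z \<longrightarrow>
        linear (J z) \<and>
        (\<forall>v. J z (J z v) = - (rs_inner r s z z) *\<^sub>R v) \<and>
        (\<forall>u v. B (J z u) v = - B u (J z v)))"

definition symmetric_op :: "('v \<Rightarrow> 'v \<Rightarrow> real) \<Rightarrow> ('v \<Rightarrow> 'v) \<Rightarrow> bool" where
  "symmetric_op B \<Omega> \<longleftrightarrow> (\<forall>v w. B (\<Omega> v) w = B v (\<Omega> w))"

end

theory Submission
  imports Defs
begin

text \<open>Process \<open>\<Omega>\<^sub>1, \<dots>, \<Omega>\<^sub>l\<close> one at a
  time, replacing the current vector \<open>w\<close> by \<open>u = a w + b \<Omega>\<^sub>k w\<close>. Since \<open>\<Omega>\<^sub>k\<close> is symmetric with
  \<open>\<Omega>\<^sub>k\<^sup>2 = -Id\<close>, with \<open>c = \<langle>w, \<Omega>\<^sub>k w\<rangle>\<close> one gets \<open>\<langle>u,u\<rangle> = Re(z\<^sup>2) + c Im(z\<^sup>2)\<close> and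
  \<open>\<langle>u, \<Omega>\<^sub>k u\<rangle> = c Re(z\<^sup>2) - Im(z\<^sup>2)\<close> for \<open>z = a + ib\<close>, so a complex square root of
  \<open>(1 + ic)/(1 + c\<^sup>2)\<close> makes \<open>u\<close> a unit vector with \<open>\<langle>u, \<Omega>\<^sub>k u\<rangle> = 0\<close>. The anticommutation
  relations make the earlier conditions \<open>\<langle>w, \<Omega>\<^sub>j w\<rangle> = 0\<close> survive the replacement, and \<open>u\<close>
  stays fixed by \<open>P\<close> because \<open>P\<close> commutes with \<open>\<Omega>\<^sub>k\<close>.\<close>

lemma ex_real_sq_diff_double_prod:
  fixes x y :: real
  shows "\<exists>a b. a\<^sup>2 - b\<^sup>2 = x \<and> 2 * a * b = y"
proof -
  define z where "z = csqrt (Complex x y)"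
  have "z\<^sup>2 = Complex x y" unfolding z_def by simp
  then have "Re z ^ 2 - Im z ^ 2 = x" "2 * Re z * Im z = y"
    by (metis Re_power2 complex.sel(1), metis Im_power2 complex.sel(2))
  then show ?thesis by blast
qed

lemma ex_unit_vector_orthogonal_to_its_image:
  fixes B :: "'v::real_vector \<Rightarrow> 'v \<Rightarrow> real"
  assumes bil: "bilinear B" and symB: "\<forall>u v. B u v = B v u"
    and lin: "linear \<Omega>" and sym: "symmetric_op B \<Omega>" and sq: "\<forall>v. \<Omega> (\<Omega> v) = - v"
    and unit: "B w w = 1"
  shows "\<exists>a b. B (a *\<^sub>R w + b *\<^sub>R \<Omega> w) (a *\<^sub>R w + b *\<^sub>R \<Omega> w) = 1 \<and>
    B (a *\<^sub>R w + b *\<^sub>R \<Omega> w) (\<Omega> (a *\<^sub>R w + b *\<^sub>R \<Omega> w)) = 0"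
proof -
  define c where "c = B w (\<Omega> w)"
  have \<Omega>w_\<Omega>w: "B (\<Omega> w) (\<Omega> w) = -1"
    using sym sq unit bilinear_rneg[OF bil] unfolding symmetric_op_def by simp
  have \<Omega>w_w: "B (\<Omega> w) w = c" using symB c_def by simp
  obtain a b where ab: "a\<^sup>2 - b\<^sup>2 = 1 / (1 + c\<^sup>2)" "2 * a * b = c / (1 + c\<^sup>2)"
    using ex_real_sq_diff_double_prod by blast
  have pos: "1 + c\<^sup>2 > 0" using zero_le_power2[of c] by linarith
  note B_simps = bilinear_ladd[OF bil] bilinear_radd[OF bil] bilinear_rsub[OF bil]
    bilinear_lmul[OF bil] bilinear_rmul[OF bil]
  have \<Omega>_plane: "\<Omega> (a *\<^sub>R w + b *\<^sub>R \<Omega> w) = a *\<^sub>R \<Omega> w - b *\<^sub>R w"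
    using lin sq by (simp add: linear_add linear_scale)
  have "B (a *\<^sub>R w + b *\<^sub>R \<Omega> w) (\<Omega> (a *\<^sub>R w + b *\<^sub>R \<Omega> w)) = (a\<^sup>2 - b\<^sup>2) * c - 2 * a * b"
    unfolding \<Omega>_plane using \<Omega>w_\<Omega>w \<Omega>w_w unit c_def by (simp add: B_simps algebra_simps power2_eq_square)
  moreover have "B (a *\<^sub>R w + b *\<^sub>R \<Omega> w) (a *\<^sub>R w + b *\<^sub>R \<Omega> w) = (a\<^sup>2 - b\<^sup>2) + 2 * a * b * c"
    using \<Omega>w_\<Omega>w \<Omega>w_w unit c_def by (simp add: B_simps algebra_simps power2_eq_square)
  moreover have "(a\<^sup>2 - b\<^sup>2) + 2 * a * b * c = 1" and "(a\<^sup>2 - b\<^sup>2) * c - 2 * a * b = 0"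
    unfolding ab using pos by (simp_all add: field_simps power2_eq_square)
  ultimately show ?thesis by metis
qed

lemma orthogonal_to_image_in_anticommuting_plane:
  fixes B :: "'v::real_vector \<Rightarrow> 'v \<Rightarrow> real"
  assumes bil: "bilinear B" and linQ: "linear Q" and sym: "symmetric_op B \<Omega>" and sq: "\<forall>v. \<Omega> (\<Omega> v) = - v"
    and anti: "\<forall>v. Q (\<Omega> v) = - \<Omega> (Q v)" and orth: "B w (Q w) = 0"
  shows "B (a *\<^sub>R w + b *\<^sub>R \<Omega> w) (Q (a *\<^sub>R w + b *\<^sub>R \<Omega> w)) = 0"
proof -
  have Q_plane: "Q (a *\<^sub>R w + b *\<^sub>R \<Omega> w) = a *\<^sub>R Q w + b *\<^sub>R Q (\<Omega> w)"
    using linQ by (simp add: linear_add linear_scale)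
  have cross: "B (\<Omega> w) (Q w) = - B w (Q (\<Omega> w))"
    using sym anti bilinear_rneg[OF bil] unfolding symmetric_op_def by simp
  have "B (\<Omega> w) (Q (\<Omega> w)) = B w (\<Omega> (Q (\<Omega> w)))"
    using sym unfolding symmetric_op_def by simp
  also have "\<Omega> (Q (\<Omega> w)) = Q w"
    using anti sq linear_neg[OF linQ] by (metis minus_minus)
  finally have diag: "B (\<Omega> w) (Q (\<Omega> w)) = 0" using orth by simp
  show ?thesis unfolding Q_plane using cross diag orth
    by (simp add: bilinear_ladd[OF bil] bilinear_radd[OF bil] bilinear_lmul[OF bil]
        bilinear_rmul[OF bil] algebra_simps)
qed

lemma ex_fixed_unit_vector_orthogonal_to_images:
  fixes B :: "'v::real_vector \<Rightarrow> 'v \<Rightarrow> real" and l m :: nat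
  assumes bil: "bilinear B" and symB: "\<forall>u v. B u v = B v u"
    and \<Omega>_lin: "\<forall>k\<in>{1..l}. linear (\<Omega> k)"
    and \<Omega>_sym: "\<forall>k\<in>{1..l}. symmetric_op B (\<Omega> k)"
    and \<Omega>_sq: "\<forall>k\<in>{1..l}. \<forall>v. \<Omega> k (\<Omega> k v) = - v"
    and \<Omega>_anti: "\<forall>k\<in>{1..l}. \<forall>j\<in>{1..l}. k \<noteq> j \<longrightarrow> (\<forall>v. \<Omega> k (\<Omega> j v) = - \<Omega> j (\<Omega> k v))"
    and P_lin: "linear P"
    and P_comm: "\<forall>k\<in>{1..l}. \<forall>v. P (\<Omega> k v) = \<Omega> k (P v)"
    and w_fix: "P w = w" and w_unit: "B w w = 1"
  shows "m \<le> l \<Longrightarrow> \<exists>w'. B w' w' = 1 \<and> (\<forall>k\<in>{1..m}. B w' (\<Omega> k w') = 0) \<and> P w' = w'"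
proof (induction m)
  case 0
  then show ?case using w_fix w_unit by auto
next
  case (Suc m)
  then obtain v where v: "B v v = 1" "\<forall>k\<in>{1..m}. B v (\<Omega> k v) = 0" "P v = v"
    by auto
  let ?\<Omega> = "\<Omega> (Suc m)"
  have m: "Suc m \<in> {1..l}" using Suc.prems by simp
  then have lin: "linear ?\<Omega>" and sym: "symmetric_op B ?\<Omega>" and sq: "\<forall>v. ?\<Omega> (?\<Omega> v) = - v"
    using \<Omega>_lin \<Omega>_sym \<Omega>_sq by auto
  obtain a b where unit: "B (a *\<^sub>R v + b *\<^sub>R ?\<Omega> v) (a *\<^sub>R v + b *\<^sub>R ?\<Omega> v) = 1"
    and orth_new: "B (a *\<^sub>R v + b *\<^sub>R ?\<Omega> v) (?\<Omega> (a *\<^sub>R v + b *\<^sub>R ?\<Omega> v)) = 0"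
    using ex_unit_vector_orthogonal_to_its_image[OF bil symB lin sym sq v(1)] by blast
  have orth_old: "B (a *\<^sub>R v + b *\<^sub>R ?\<Omega> v) (\<Omega> k (a *\<^sub>R v + b *\<^sub>R ?\<Omega> v)) = 0"
    if k: "k \<in> {1..m}" for k
  proof (rule orthogonal_to_image_in_anticommuting_plane[OF bil _ sym sq])
    have "k \<in> {1..l}" "k \<noteq> Suc m" using k Suc.prems by auto
    then show "linear (\<Omega> k)" and "\<forall>x. \<Omega> k (?\<Omega> x) = - ?\<Omega> (\<Omega> k x)"
      using m \<Omega>_lin \<Omega>_anti by blast+
    show "B v (\<Omega> k v) = 0" using k v(2) by blast
  qed
  have "P (a *\<^sub>R v + b *\<^sub>R ?\<Omega> v) = a *\<^sub>R v + b *\<^sub>R ?\<Omega> v"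
    using P_lin v(3) P_comm m by (simp add: linear_add linear_scale)
  then show ?case
    using unit orth_new orth_old by (intro exI[of _ "a *\<^sub>R v + b *\<^sub>R ?\<Omega> v"]) (auto simp: le_Suc_eq)
qed

theorem corollary2p10:
  fixes r s l :: nat
    and J :: "(nat \<Rightarrow> real) \<Rightarrow> 'v::real_vector \<Rightarrow> 'v"
    and B :: "'v \<Rightarrow> 'v \<Rightarrow> real"
    and \<Omega> :: "nat \<Rightarrow> 'v \<Rightarrow> 'v"
    and P :: "'v \<Rightarrow> 'v"
    and w :: 'v
  assumes adm: "admissible_module r s J B"
    and \<Omega>_lin: "\<forall>k\<in>{1..l}. linear (\<Omega> k)"
    and \<Omega>_sym: "\<forall>k\<in>{1..l}. symmetric_op B (\<Omega> k)"
    and \<Omega>_sq: "\<forall>k\<in>{1..l}. \<forall>v. \<Omega> k (\<Omega> k v) = - v"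
    and \<Omega>_anti: "\<forall>k\<in>{1..l}. \<forall>j\<in>{1..l}. k \<noteq> j \<longrightarrow> (\<forall>v. \<Omega> k (\<Omega> j v) = - \<Omega> j (\<Omega> k v))"
    and P_lin: "linear P"
    and P_sq: "\<forall>v. P (P v) = v"
    and P_comm: "\<forall>k\<in>{1..l}. \<forall>v. P (\<Omega> k v) = \<Omega> k (P v)"
    and w_fix: "P w = w"
    and w_norm: "B w w = 1"
  shows "\<exists>w'. B w' w' = 1 \<and> (\<forall>k\<in>{1..l}. B w' (\<Omega> k w') = 0) \<and> P w' = w'"
proof -
  have "bilinear B" and "\<forall>u v. B u v = B v u"
    using adm unfolding admissible_module_def scalar_product_def by blast+
  then show ?thesis
    using ex_fixed_unit_vector_orthogonal_to_images[OF _ _ \<Omega>_lin \<Omega>_sym \<Omega>_sq \<Omega>_anti P_lin P_comm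
        w_fix w_norm order_refl] by blast
qed

end
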